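(* Assume $2k+1 \le n/4$. Consider the random hard instance $\mathcal{D}$ and any randomized algorithm that makes exactly $n/4$ comparison queries and outputs a set $S$ of $2k+1$ elements. Let $C$ be the set of critical elements and $T$ the (random) set of elements that appear in at least one query made by the algorithm. Then $$\mathbb{E}[|S \cap C|] \le \frac{\mathbb{E}[|C \cap T|]}{2} + \frac{2k+1}{2}.$$
   Context: Model: $n$ elements, exactly $k$ corrupted; a tournament (comparison graph) says for each pair which is larger; restricted to uncorrupted elements it is acyclic, comparisons involving corrupted elements arbitrary. A comparison query reveals the orientation of one pair. Random hard instance $\mathcal{D}$: take $2k+1$ critical elements $c_0,\dots,c_{2k}$ consisting of the $k$ corrupted elements and the top $k+1$ uncorrupted elements, with comparisons among them forming the cyclic tournament in which $c_i$ is larger than $c_{i+1},\dots,c_{i+k}$ (indices mod $2k+1$); every critical element is larger than every non-critical element, and the $n-2k-1$ non-critical (uncorrupted) elements are totally ordered; then the labels (indices) of all $n$ elements are permuted uniformly at random. The set of critical elements is denoted $C$. Expectations are over the instance randomness and the algorithm's randomness. *)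

theory Defs
  imports "HOL-Probability.Probability" "HOL-Combinatorics.Permutations"
begin

text \<open>The random instance is given by a uniformly random
  bijection pos (pos permutes {0..<n}); element a sits at position pos a.
  Positions 0..2k are the critical elements c_0..c_2k, positions 2k+1..n-1 are
  the non-critical elements (smaller position = larger element).
  base_beats k p q: the element at position p is larger than the one at q.\<close>

definition base_beats :: "nat \<Rightarrow> nat \<Rightarrow> nat \<Rightarrow> bool" where
  "base_beats k p q =
    (if p < 2*k+1 \<and> q < 2*k+1 then (q + (2*k+1) - p) mod (2*k+1) \<in> {1..k}
     else if p < 2*k+1 then True
     else if q < 2*k+1 then False
     else p < q)"

definition hard_tournament :: "nat \<Rightarrow> (nat \<Rightarrow> nat) \<Rightarrow> nat \<Rightarrow> nat \<Rightarrow> bool" where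
  "hard_tournament k pos a b = base_beats k (pos a) (pos b)"

definition critical_set :: "nat \<Rightarrow> nat \<Rightarrow> (nat \<Rightarrow> nat) \<Rightarrow> nat set" where
  "critical_set k n pos = {a. a < n \<and> pos a < 2*k+1}"

text \<open>A deterministic adaptive query strategy Q maps the answers seen so far
  to the next queried pair; G a b is the answer "a is larger than b".\<close>

fun run_hist :: "(bool list \<Rightarrow> nat \<times> nat) \<Rightarrow> (nat \<Rightarrow> nat \<Rightarrow> bool) \<Rightarrow> nat \<Rightarrow> bool list" where
  "run_hist Q G 0 = []"
| "run_hist Q G (Suc i) = run_hist Q G i @ [G (fst (Q (run_hist Q G i))) (snd (Q (run_hist Q G i)))]"

definition queried_set :: "(bool list \<Rightarrow> nat \<times> nat) \<Rightarrow> (nat \<Rightarrow> nat \<Rightarrow> bool) \<Rightarrow> nat \<Rightarrow> nat set" where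
  "queried_set Q G m = (\<Union>i<m. {fst (Q (run_hist Q G i)), snd (Q (run_hist Q G i))})"

definition instance_pmf :: "nat \<Rightarrow> (nat \<Rightarrow> nat) pmf" where
  "instance_pmf n = pmf_of_set {pos. pos permutes {0..<n}}"

end

theory Submission
  imports Defs
begin

text \<open>Fix the coins of the algorithm. Exchanging the positions of two elements that it never
  queries changes none of the answers it sees, hence neither its output \<open>S\<close> nor its queried
  set \<open>T\<close>. Double counting over all such exchanges of an unqueried output element with an
  unqueried element \<open>u \<in> U\<close> gives
  \<open>\<Sum>\<^sub>\<pi> |U| \<cdot> #{critical elements of S - T} = \<Sum>\<^sub>\<pi> |S - T| \<cdot> #{critical elements of U}\<close>.
  At most \<open>n/2\<close> elements are queried, so \<open>|U| \<ge> n/2 \<ge> 2(2k+1) \<ge> 2|S - T|\<close>: on average the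
  unqueried part of \<open>S\<close> contains at most half of the \<open>2k+1 - |C \<inter> T|\<close> unqueried critical
  elements. Together with the at most \<open>|C \<inter> T|\<close> queried critical outputs this gives the bound
  for every fixed choice of coins, and averaging over the coins finishes the proof.\<close>

lemma sum_card_transpose_double_counting:
  fixes P :: "('a \<Rightarrow> 'b) set" and S U :: "('a \<Rightarrow> 'b) \<Rightarrow> 'a set"
  assumes "finite P" "\<And>p. p \<in> P \<Longrightarrow> finite (S p)" "\<And>p. p \<in> P \<Longrightarrow> finite (U p)"
    and closed: "\<And>p a b. p \<in> P \<Longrightarrow> a \<in> S p \<Longrightarrow> b \<in> U p \<Longrightarrow>
       p \<circ> Transposition.transpose a b \<in> P \<and> S (p \<circ> Transposition.transpose a b) = S p
       \<and> U (p \<circ> Transposition.transpose a b) = U p"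
  shows "(\<Sum>p\<in>P. card {a \<in> S p. p a \<in> X} * card (U p)) = (\<Sum>p\<in>P. card (S p) * card {b \<in> U p. p b \<in> X})"
proof -
  define swap :: "('a \<Rightarrow> 'b) \<times> 'a \<times> 'a \<Rightarrow> ('a \<Rightarrow> 'b) \<times> 'a \<times> 'a"
    where "swap = (\<lambda>(p, a, b). (p \<circ> Transposition.transpose a b, a, b))"
  let ?L = "SIGMA p:P. {a \<in> S p. p a \<in> X} \<times> U p"
  let ?R = "SIGMA p:P. S p \<times> {b \<in> U p. p b \<in> X}"
  have swap_swap: "swap (swap x) = x" for x
    by (cases x) (simp add: swap_def comp_assoc)
  have "bij_betw swap ?L ?R"
  proof (rule bij_betw_byWitness[where f' = swap])
    show "swap ` ?L \<subseteq> ?R" "swap ` ?R \<subseteq> ?L"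
      using closed by (fastforce simp: swap_def)+
  qed (simp_all add: swap_swap)
  then have "card ?L = card ?R"
    by (rule bij_betw_same_card)
  with assms(1-3) show ?thesis
    by (simp add: card_cartesian_product)
qed

lemma sum_card_transpose_hits_le:
  fixes P :: "('a \<Rightarrow> 'b) set" and S U :: "('a \<Rightarrow> 'b) \<Rightarrow> 'a set"
  assumes "finite P" "\<And>p. p \<in> P \<Longrightarrow> finite (S p)" "\<And>p. p \<in> P \<Longrightarrow> finite (U p)"
    and closed: "\<And>p a b. p \<in> P \<Longrightarrow> a \<in> S p \<Longrightarrow> b \<in> U p \<Longrightarrow>
       p \<circ> Transposition.transpose a b \<in> P \<and> S (p \<circ> Transposition.transpose a b) = S p
       \<and> U (p \<circ> Transposition.transpose a b) = U p"
    and card_S: "\<And>p. p \<in> P \<Longrightarrow> card (S p) \<le> c"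
    and card_U: "\<And>p. p \<in> P \<Longrightarrow> 2 * c \<le> card (U p)"
  shows "2 * (\<Sum>p\<in>P. card {a \<in> S p. p a \<in> X}) \<le> (\<Sum>p\<in>P. card {b \<in> U p. p b \<in> X})"
proof (cases "c = 0")
  case True
  have "card {a \<in> S p. p a \<in> X} = 0" if "p \<in> P" for p
    using card_mono[OF assms(2)[OF that], of "{a \<in> S p. p a \<in> X}"] card_S[OF that] True by simp
  then show ?thesis
    by simp
next
  case False
  have "c * (2 * (\<Sum>p\<in>P. card {a \<in> S p. p a \<in> X})) \<le> (\<Sum>p\<in>P. card {a \<in> S p. p a \<in> X} * card (U p))"
    unfolding sum_distrib_left using card_U by (intro sum_mono) (simp add: mult.commute)
  also have "\<dots> = (\<Sum>p\<in>P. card (S p) * card {b \<in> U p. p b \<in> X})"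
    using assms(1-3) closed by (rule sum_card_transpose_double_counting)
  also have "\<dots> \<le> c * (\<Sum>p\<in>P. card {b \<in> U p. p b \<in> X})"
    unfolding sum_distrib_left using card_S by (intro sum_mono) simp
  finally show ?thesis
    using False by simp
qed

lemma pair_pmf_as_bind: "pair_pmf A R = bind_pmf R (\<lambda>r. map_pmf (\<lambda>a. (a, r)) A)"
  unfolding pair_pmf_def map_pmf_def by (subst bind_commute_pmf) simp

lemma expectation_pair_pmf:
  fixes f :: "'a \<times> 'b \<Rightarrow> real"
  assumes "\<And>x. \<bar>f x\<bar> \<le> B"
  shows "measure_pmf.expectation (pair_pmf A R) f
       = measure_pmf.expectation R (\<lambda>r. measure_pmf.expectation A (\<lambda>a. f (a, r)))"
proof -
  have "measure_pmf.expectation (pair_pmf A R) f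
      = integral\<^sup>L (measure_pmf R \<bind> (\<lambda>r. measure_pmf (map_pmf (\<lambda>a. (a, r)) A))) f"
    by (simp add: pair_pmf_as_bind measure_pmf_bind)
  also have "\<dots> = measure_pmf.expectation R (\<lambda>r. measure_pmf.expectation (map_pmf (\<lambda>a. (a, r)) A) f)"
    by (rule integral_bind[where K = "count_space UNIV" and B = B and B' = 1])
      (auto intro: assms measure_pmf_in_subprob_space)
  finally show ?thesis
    by simp
qed

lemma abs_expectation_le:
  fixes f :: "'a \<Rightarrow> real"
  assumes "\<And>x. \<bar>f x\<bar> \<le> B"
  shows "\<bar>measure_pmf.expectation A f\<bar> \<le> B"
proof -
  have "integrable A f"
    by (rule measure_pmf.integrable_const_bound[where B = B]) (use assms in auto)
  moreover have "- B \<le> f x" "f x \<le> B" for x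
    using assms[of x] by linarith+
  ultimately have "- B \<le> measure_pmf.expectation A f" "measure_pmf.expectation A f \<le> B"
    by (auto intro: measure_pmf.integral_ge_const measure_pmf.integral_le_const)
  then show ?thesis
    by linarith
qed

lemma expectation_pair_pmf_le_affine_fibres:
  fixes f g :: "'a \<times> 'b \<Rightarrow> real"
  assumes f_bound: "\<And>x. \<bar>f x\<bar> \<le> B" and g_bound: "\<And>x. \<bar>g x\<bar> \<le> B"
    and fibres: "\<And>r. measure_pmf.expectation A (\<lambda>a. f (a, r))
                       \<le> \<alpha> * measure_pmf.expectation A (\<lambda>a. g (a, r)) + \<beta>"
  shows "measure_pmf.expectation (pair_pmf A R) f \<le> \<alpha> * measure_pmf.expectation (pair_pmf A R) g + \<beta>"
proof -
  have integrable: "integrable R (\<lambda>r. measure_pmf.expectation A (\<lambda>a. h (a, r)))"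
    if "\<And>x. \<bar>h x\<bar> \<le> B" for h :: "'a \<times> 'b \<Rightarrow> real"
    by (rule measure_pmf.integrable_const_bound[where B = B]) (auto intro: abs_expectation_le that)
  have "measure_pmf.expectation (pair_pmf A R) f
      = measure_pmf.expectation R (\<lambda>r. measure_pmf.expectation A (\<lambda>a. f (a, r)))"
    by (rule expectation_pair_pmf[OF f_bound])
  also have "\<dots> \<le> measure_pmf.expectation R (\<lambda>r. \<alpha> * measure_pmf.expectation A (\<lambda>a. g (a, r)) + \<beta>)"
    using integrable[of f, OF f_bound] integrable[of g, OF g_bound] by (intro integral_mono fibres) auto
  also have "\<dots> = \<alpha> * measure_pmf.expectation R (\<lambda>r. measure_pmf.expectation A (\<lambda>a. g (a, r))) + \<beta>"
    using integrable[of g, OF g_bound] by simp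
  also have "\<dots> = \<alpha> * measure_pmf.expectation (pair_pmf A R) g + \<beta>"
    by (simp add: expectation_pair_pmf[OF g_bound])
  finally show ?thesis .
qed

lemma length_run_hist [simp]: "length (run_hist Q G i) = i"
  by (induction i) auto

lemma run_hist_cong_queried:
  assumes "\<And>x y. x \<in> queried_set Q G m \<Longrightarrow> y \<in> queried_set Q G m \<Longrightarrow> G' x y = G x y"
    and "i \<le> m"
  shows "run_hist Q G' i = run_hist Q G i"
  using \<open>i \<le> m\<close>
proof (induction i)
  case 0
  then show ?case by simp
next
  case (Suc i)
  then have "fst (Q (run_hist Q G i)) \<in> queried_set Q G m" "snd (Q (run_hist Q G i)) \<in> queried_set Q G m"
    unfolding queried_set_def by auto
  with Suc assms(1) show ?case by simp
qed

lemma queried_set_cong_queried: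
  assumes "\<And>x y. x \<in> queried_set Q G m \<Longrightarrow> y \<in> queried_set Q G m \<Longrightarrow> G' x y = G x y"
  shows "queried_set Q G' m = queried_set Q G m"
  unfolding queried_set_def using run_hist_cong_queried[OF assms] by (intro SUP_cong) auto

lemma finite_queried_set: "finite (queried_set Q G m)"
  unfolding queried_set_def by simp

lemma card_queried_set_le: "card (queried_set Q G m) \<le> 2 * m"
proof -
  have "card (queried_set Q G m) \<le> (\<Sum>i<m. card {fst (Q (run_hist Q G i)), snd (Q (run_hist Q G i))})"
    unfolding queried_set_def by (rule card_UN_le) simp
  also have "\<dots> \<le> (\<Sum>i<m. 2)"
    by (intro sum_mono) (simp add: card_insert_le_m1)
  finally show ?thesis by simp
qed

lemma card_unqueried_ge: "n - 2 * m \<le> card ({0..<n} - queried_set Q G m)"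
  using diff_card_le_card_Diff[OF finite_queried_set, of "{0..<n}" Q G m] card_queried_set_le[of Q G m]
  by simp

lemma
  assumes "a \<notin> queried_set Q (hard_tournament k pos) m" "b \<notin> queried_set Q (hard_tournament k pos) m"
  shows run_hist_transpose_unqueried:
      "run_hist Q (hard_tournament k (pos \<circ> Transposition.transpose a b)) m = run_hist Q (hard_tournament k pos) m"
    and queried_set_transpose_unqueried:
      "queried_set Q (hard_tournament k (pos \<circ> Transposition.transpose a b)) m = queried_set Q (hard_tournament k pos) m"
proof -
  have agree: "hard_tournament k (pos \<circ> Transposition.transpose a b) x y = hard_tournament k pos x y"
    if "x \<in> queried_set Q (hard_tournament k pos) m" "y \<in> queried_set Q (hard_tournament k pos) m" for x y
  proof -
    have "Transposition.transpose a b x = x" "Transposition.transpose a b y = y"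
      using that assms by (metis transpose_apply_other)+
    then show ?thesis by (simp add: hard_tournament_def)
  qed
  show "run_hist Q (hard_tournament k (pos \<circ> Transposition.transpose a b)) m = run_hist Q (hard_tournament k pos) m"
    by (rule run_hist_cong_queried[OF agree order_refl])
  show "queried_set Q (hard_tournament k (pos \<circ> Transposition.transpose a b)) m = queried_set Q (hard_tournament k pos) m"
    by (rule queried_set_cong_queried[OF agree])
qed

lemma card_critical_set:
  assumes "pos permutes {0..<n}" "2*k+1 \<le> n"
  shows "card (critical_set k n pos) = 2*k+1"
proof -
  have "inj_on pos (critical_set k n pos)"
    using permutes_inj[OF assms(1)] by (auto intro: inj_on_subset)
  moreover have "pos ` critical_set k n pos = {..<2*k+1}"
  proof
    show "{..<2*k+1} \<subseteq> pos ` critical_set k n pos"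
    proof
      fix y assume "y \<in> {..<2*k+1}"
      with assms have "y \<in> pos ` {0..<n}" by (simp add: permutes_image[OF assms(1)])
      with \<open>y \<in> {..<2*k+1}\<close> show "y \<in> pos ` critical_set k n pos"
        unfolding critical_set_def by auto
    qed
  qed (auto simp: critical_set_def)
  ultimately show ?thesis by (metis card_image card_lessThan)
qed

lemma card_Int_critical_set_le: "card (X \<inter> critical_set k n pos) \<le> n"
proof -
  have "X \<inter> critical_set k n pos \<subseteq> {0..<n}"
    by (auto simp: critical_set_def)
  then show ?thesis
    by (metis card_atLeastLessThan card_mono diff_zero finite_atLeastLessThan)
qed

lemma card_Int_critical_set_le_split:
  assumes "finite S" "finite T"
  shows "card (S \<inter> critical_set k n pos)
       \<le> card (critical_set k n pos \<inter> T) + card {a \<in> S - T. pos a < 2*k+1}"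
proof -
  have "S \<inter> critical_set k n pos \<subseteq> (critical_set k n pos \<inter> T) \<union> {a \<in> S - T. pos a < 2*k+1}"
    unfolding critical_set_def by auto
  then have "card (S \<inter> critical_set k n pos) \<le> card ((critical_set k n pos \<inter> T) \<union> {a \<in> S - T. pos a < 2*k+1})"
    by (rule card_mono[rotated]) (use assms in auto)
  also have "\<dots> \<le> card (critical_set k n pos \<inter> T) + card {a \<in> S - T. pos a < 2*k+1}"
    by (rule card_Un_le)
  finally show ?thesis .
qed

lemma card_critical_set_split:
  assumes "pos permutes {0..<n}" "2*k+1 \<le> n" "finite T"
  shows "card (critical_set k n pos \<inter> T) + card {b \<in> {0..<n} - T. pos b < 2*k+1} = 2*k+1"
proof -
  have "critical_set k n pos = (critical_set k n pos \<inter> T) \<union> {b \<in> {0..<n} - T. pos b < 2*k+1}"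
    unfolding critical_set_def by auto
  moreover have "card ((critical_set k n pos \<inter> T) \<union> {b \<in> {0..<n} - T. pos b < 2*k+1})
      = card (critical_set k n pos \<inter> T) + card {b \<in> {0..<n} - T. pos b < 2*k+1}"
    by (rule card_Un_disjoint) (use assms(3) in auto)
  ultimately show ?thesis
    using card_critical_set[OF assms(1,2)] by simp
qed

lemma sum_card_output_critical_le:
  fixes Q :: "bool list \<Rightarrow> nat \<times> nat" and Out :: "bool list \<Rightarrow> nat set"
  assumes size: "4 * (2*k+1) \<le> n"
    and valid_output: "\<And>h. length h = n div 4 \<Longrightarrow> Out h \<subseteq> {0..<n} \<and> card (Out h) = 2*k+1"
  shows "2 * (\<Sum>pos | pos permutes {0..<n}.
              card (Out (run_hist Q (hard_tournament k pos) (n div 4)) \<inter> critical_set k n pos))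
       \<le> (\<Sum>pos | pos permutes {0..<n}.
              card (critical_set k n pos \<inter> queried_set Q (hard_tournament k pos) (n div 4)))
         + card {pos. pos permutes {0..<n}} * (2*k+1)"
proof -
  define m where "m = n div 4"
  define c where "c = 2*k+1"
  define P where "P = {pos. pos permutes {0..<n}}"
  define S where "S pos = Out (run_hist Q (hard_tournament k pos) m)" for pos
  define T where "T pos = queried_set Q (hard_tournament k pos) m" for pos
  define U where "U pos = {0..<n} - T pos" for pos
  define C where "C pos = critical_set k n pos" for pos
  have "finite P"
    unfolding P_def by (rule finite_permutations) simp
  have S: "S pos \<subseteq> {0..<n}" "finite (S pos)" "card (S pos) = c" for pos
    using valid_output[of "run_hist Q (hard_tournament k pos) m"]
    unfolding S_def m_def c_def by (auto intro: finite_subset)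
  have "finite (T pos)" for pos
    unfolding T_def by (rule finite_queried_set)
  have closed: "pos \<circ> Transposition.transpose a b \<in> P
      \<and> S (pos \<circ> Transposition.transpose a b) - T (pos \<circ> Transposition.transpose a b) = S pos - T pos
      \<and> U (pos \<circ> Transposition.transpose a b) = U pos"
    if "pos \<in> P" "a \<in> S pos - T pos" "b \<in> U pos" for pos a b
  proof -
    have "a \<in> {0..<n}" "a \<notin> T pos" "b \<in> {0..<n}" "b \<notin> T pos"
      using that S(1)[of pos] unfolding U_def by auto
    then show ?thesis
      using that(1) unfolding P_def S_def U_def T_def
      by (simp add: run_hist_transpose_unqueried queried_set_transpose_unqueried
          permutes_compose permutes_swap_id)
  qed
  have "2 * (\<Sum>pos\<in>P. card {a \<in> S pos - T pos. pos a \<in> {..<c}})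
      \<le> (\<Sum>pos\<in>P. card {b \<in> U pos. pos b \<in> {..<c}})"
  proof (rule sum_card_transpose_hits_le[OF \<open>finite P\<close> _ _ closed])
    show "card (S pos - T pos) \<le> c" for pos
      using card_mono[OF S(2) Diff_subset] S(3) by simp
    show "2 * c \<le> card (U pos)" for pos
      using card_unqueried_ge[of n m Q "hard_tournament k pos"] size
      unfolding U_def T_def m_def c_def by linarith
  qed (use S \<open>finite (T _)\<close> in \<open>auto simp: U_def\<close>)
  then have unqueried_hits: "2 * (\<Sum>pos\<in>P. card {a \<in> S pos - T pos. pos a < c})
      \<le> (\<Sum>pos\<in>P. card {b \<in> U pos. pos b < c})"
    by simp
  have "2 * (\<Sum>pos\<in>P. card (S pos \<inter> C pos))
      \<le> 2 * (\<Sum>pos\<in>P. card (C pos \<inter> T pos) + card {a \<in> S pos - T pos. pos a < c})"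
    unfolding C_def c_def using S(2) \<open>finite (T _)\<close>
    by (intro mult_le_mono2 sum_mono card_Int_critical_set_le_split)
  also have "\<dots> \<le> (\<Sum>pos\<in>P. card (C pos \<inter> T pos))
      + (\<Sum>pos\<in>P. card (C pos \<inter> T pos) + card {b \<in> U pos. pos b < c})"
    using unqueried_hits by (simp add: sum.distrib)
  also have "(\<Sum>pos\<in>P. card (C pos \<inter> T pos) + card {b \<in> U pos. pos b < c}) = card P * c"
    using card_critical_set_split[of _ n k] size \<open>finite (T _)\<close>
    unfolding P_def C_def U_def c_def by simp
  finally show ?thesis
    unfolding P_def S_def C_def T_def m_def c_def by simp
qed

lemma expectation_output_critical_le:
  fixes Q :: "bool list \<Rightarrow> nat \<times> nat" and Out :: "bool list \<Rightarrow> nat set"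
  assumes size: "4 * (2*k+1) \<le> n"
    and valid_output: "\<And>h. length h = n div 4 \<Longrightarrow> Out h \<subseteq> {0..<n} \<and> card (Out h) = 2*k+1"
  shows "measure_pmf.expectation (instance_pmf n)
           (\<lambda>pos. real (card (Out (run_hist Q (hard_tournament k pos) (n div 4)) \<inter> critical_set k n pos)))
       \<le> measure_pmf.expectation (instance_pmf n)
           (\<lambda>pos. real (card (critical_set k n pos \<inter> queried_set Q (hard_tournament k pos) (n div 4)))) / 2
         + real (2*k+1) / 2"
proof -
  define P where "P = {pos. pos permutes {0..<n}}"
  define hits where "hits pos = card (Out (run_hist Q (hard_tournament k pos) (n div 4)) \<inter> critical_set k n pos)" for pos
  define seen where "seen pos = card (critical_set k n pos \<inter> queried_set Q (hard_tournament k pos) (n div 4))" for pos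
  have "finite P"
    unfolding P_def by (rule finite_permutations) simp
  have "P \<noteq> {}"
    unfolding P_def using permutes_id by blast
  have "card P > 0"
    using \<open>finite P\<close> \<open>P \<noteq> {}\<close> by (simp add: card_gt_0_iff)
  have "2 * sum hits P \<le> sum seen P + card P * (2*k+1)"
    using sum_card_output_critical_le[OF size valid_output]
    unfolding P_def hits_def seen_def by simp
  then have "2 * (\<Sum>pos\<in>P. real (hits pos)) \<le> (\<Sum>pos\<in>P. real (seen pos)) + real (card P) * real (2*k+1)"
    by (metis (mono_tags, lifting) of_nat_add of_nat_le_iff of_nat_mult of_nat_numeral of_nat_sum)
  with \<open>card P > 0\<close> show ?thesis
    unfolding instance_pmf_def P_def[symmetric] integral_pmf_of_set[OF \<open>P \<noteq> {}\<close> \<open>finite P\<close>]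
      hits_def[symmetric] seen_def[symmetric]
    by (simp add: divide_simps) (simp add: mult.commute)
qed

theorem mainTheorem8:
  fixes n k :: nat
    and R :: "'r pmf"
    and Q :: "'r \<Rightarrow> bool list \<Rightarrow> nat \<times> nat"
    and Out :: "'r \<Rightarrow> bool list \<Rightarrow> nat set"
  assumes size: "4 * (2*k+1) \<le> n"
    and valid_queries: "\<And>r h. length h < n div 4 \<Longrightarrow>
        fst (Q r h) < n \<and> snd (Q r h) < n \<and> fst (Q r h) \<noteq> snd (Q r h)"
    and valid_output: "\<And>r h. length h = n div 4 \<Longrightarrow>
        Out r h \<subseteq> {0..<n} \<and> card (Out r h) = 2*k+1"
  shows "measure_pmf.expectation (pair_pmf (instance_pmf n) R)
           (\<lambda>(pos, r). real (card (Out r (run_hist (Q r) (hard_tournament k pos) (n div 4))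
                                    \<inter> critical_set k n pos)))
         \<le> measure_pmf.expectation (pair_pmf (instance_pmf n) R)
              (\<lambda>(pos, r). real (card (critical_set k n pos
                                    \<inter> queried_set (Q r) (hard_tournament k pos) (n div 4)))) / 2
           + real (2*k+1) / 2"
proof -
  define hits where "hits = (\<lambda>(pos, r). real (card (Out r (run_hist (Q r) (hard_tournament k pos) (n div 4))
                                    \<inter> critical_set k n pos)))"
  define seen where "seen = (\<lambda>(pos, r). real (card (critical_set k n pos
                                    \<inter> queried_set (Q r) (hard_tournament k pos) (n div 4))))"
  have hits_bound: "\<bar>hits x\<bar> \<le> n" and seen_bound: "\<bar>seen x\<bar> \<le> n" for x
    unfolding hits_def seen_def
    by (simp_all add: split_def card_Int_critical_set_le Int_commute[of "critical_set _ _ _"])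
  have "measure_pmf.expectation (pair_pmf (instance_pmf n) R) hits
      \<le> 1 / 2 * measure_pmf.expectation (pair_pmf (instance_pmf n) R) seen + real (2*k+1) / 2"
  proof (rule expectation_pair_pmf_le_affine_fibres[OF hits_bound seen_bound])
    fix r
    show "measure_pmf.expectation (instance_pmf n) (\<lambda>pos. hits (pos, r))
        \<le> 1 / 2 * measure_pmf.expectation (instance_pmf n) (\<lambda>pos. seen (pos, r)) + real (2*k+1) / 2"
      using expectation_output_critical_le[OF size, of "Out r" "Q r"] valid_output
      unfolding hits_def seen_def by simp
  qed
  then show ?thesis
    unfolding hits_def seen_def by simp
qed

end
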